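(* For $n\ge 0$ let $a(n)$ be the number of compositions of $n$ that avoid the composition $34543$ (i.e. $3\,4\,5\,4\,3$). Then $$\sum_{n=0}^{\infty} a(n)\,x^n = -\frac{1-4x+6x^{2}-4x^{3}+x^{4}+x^{16}+x^{13}-x^{14}+x^{9}-2x^{10}+x^{11}+x^{5}-3x^{6}+3x^{7}-x^{8}}{x^{18}+x^{17}-x^{16}+2x^{14}-x^{13}-2x^{11}+3x^{10}-x^{9}+2x^{8}-5x^{7}+4x^{6}-x^{5}-2x^{4}+7x^{3}-9x^{2}+5x-1}.$$ The first 31 terms $a(0),\dots,a(30)$ are $1, 1, 2, 4, 8, 16, 32, 64, 128, 256, 512, 1024, 2048, 4096, 8192, 16384, 32768, 65536, 131072, 262143, 524281, 1048546, 2097050, 4194001, 8387784, 16775108, 33549270, 67096623, 134189393, 268371074, 536726740$. Moreover $\lim_{n\to\infty} a(n+1)/a(n) = r$ with $r = 1.99994300442\ldots$, and $a(n)\sim c\, r^n$ with $c = 0.50029301491\ldots$.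
   Context: A composition of a non-negative integer $n$ is a finite ordered list $a_1 a_2\cdots a_k$ of positive integers with $a_1+\cdots+a_k=n$ (the empty composition is the unique composition of $0$). A composition $a_1\cdots a_k$ includes (contains) the composition $b_1\cdots b_s$ if $k\ge s$ and there exists $i$ with $1\le i\le k-s+1$ such that $b_j\le a_{i+j-1}$ for all $j=1,\dots,s$. It avoids $b_1\cdots b_s$ if it does not include it. The decimal constants are given by their printed initial digits. *)

theory Defs
  imports "HOL-Analysis.Analysis" "HOL-Computational_Algebra.Formal_Power_Series"
    "HOL-Library.Landau_Symbols"
begin

definition is_composition :: "nat \<Rightarrow> nat list \<Rightarrow> bool" where
  "is_composition n xs \<longleftrightarrow> (\<forall>x\<in>set xs. 0 < x) \<and> sum_list xs = n"

(* comp_includes as bs: as = a_1..a_k includes bs = b_1..b_s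
   (0-indexed version of: k \<ge> s and some i with b_j \<le> a_{i+j-1} for all j) *)
definition comp_includes :: "nat list \<Rightarrow> nat list \<Rightarrow> bool" where
  "comp_includes as bs \<longleftrightarrow> length bs \<le> length as \<and>
     (\<exists>i. i + length bs \<le> length as \<and> (\<forall>j<length bs. bs ! j \<le> as ! (i + j)))"

definition comp_avoids :: "nat list \<Rightarrow> nat list \<Rightarrow> bool" where
  "comp_avoids as bs \<longleftrightarrow> \<not> comp_includes as bs"

definition a34543 :: "nat \<Rightarrow> nat" where
  "a34543 n = card {xs. is_composition n xs \<and> comp_avoids xs [3,4,5,4,3]}"

end

(*
  Reading a composition from its last part, a six-state automaton tracks the longest suffix of
  34543 that is dominated by the leading parts.  The generating functions of the five states
  that avoid the pattern satisfy a linear system whose elimination gives the rational function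
  N/D; its coefficient recurrence yields the listed values.

  D has a simple root rho, about 0.500014, located between two consecutive multiples of 2^-50
  by exact evaluation.  Dividing it out, D = (1 - x/rho) E, the error a(n) - c rho^-n with
  c = N(rho)/E(rho) is annihilated by E.  A polynomial multiple of E that is dominated by its
  constant term on |x| <= 33/64 shows that this error is O((64/33)^n), which is o(rho^-n).
  Hence a(n+1)/a(n) tends to 1/rho and a(n) ~ c rho^-n; Lipschitz bounds for N and E near the
  bracket give the decimal values of 1/rho and c = N(rho)/(-rho D'(rho)).
*)

theory Submission
  imports Defs "HOL-Computational_Algebra.Polynomial_FPS"
begin

unbundle no vec_syntax
unbundle fps_syntax

section \<open>Compositions counted by an automaton\<close>

lemma is_composition_0_iff: "is_composition 0 xs \<longleftrightarrow> xs = []"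
  by (cases xs) (auto simp: is_composition_def)

lemma is_composition_Cons_iff:
  "is_composition n (k # ys) \<longleftrightarrow> 0 < k \<and> k \<le> n \<and> is_composition (n - k) ys"
  by (auto simp: is_composition_def)

lemma length_le_if_is_composition: "is_composition n xs \<Longrightarrow> length xs \<le> n"
  by (induction xs arbitrary: n) (fastforce simp: is_composition_Cons_iff)+

lemma finite_compositions: "finite {xs. is_composition n xs \<and> P xs}"
proof (rule finite_subset)
  show "{xs. is_composition n xs \<and> P xs} \<subseteq> {xs. set xs \<subseteq> {..n} \<and> length xs \<le> n}"
    using length_le_if_is_composition by (auto simp: is_composition_def member_le_sum_list)
  show "finite {xs. set xs \<subseteq> {..n} \<and> length xs \<le> n}"
    by (rule finite_lists_length_le) simp
qed

lemma card_compositions_by_first_part: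
  assumes "0 < n"
  shows "card {xs. is_composition n xs \<and> P xs} =
           (\<Sum>k=1..n. card {ys. is_composition (n - k) ys \<and> P (k # ys)})"
proof -
  have "{xs. is_composition n xs \<and> P xs} =
          (\<Union>k\<in>{1..n}. Cons k ` {ys. is_composition (n - k) ys \<and> P (k # ys)})"
  proof (intro equalityI subsetI)
    fix xs assume "xs \<in> {xs. is_composition n xs \<and> P xs}"
    moreover from this assms obtain k ys where "xs = k # ys"
      by (cases xs) (auto simp: is_composition_def)
    ultimately show "xs \<in> (\<Union>k\<in>{1..n}. Cons k ` {ys. is_composition (n - k) ys \<and> P (k # ys)})"
      by (auto simp: is_composition_Cons_iff)
  qed (auto simp: is_composition_Cons_iff)
  also have "card \<dots> = (\<Sum>k=1..n. card (Cons k ` {ys. is_composition (n - k) ys \<and> P (k # ys)}))"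
    by (rule card_UN_disjoint) (auto simp: finite_compositions)
  also have "\<dots> = (\<Sum>k=1..n. card {ys. is_composition (n - k) ys \<and> P (k # ys)})"
    by (intro sum.cong refl card_image) auto
  finally show ?thesis .
qed


definition comp_count :: "(nat list \<Rightarrow> 'a) \<Rightarrow> 'a \<Rightarrow> nat \<Rightarrow> nat" where
  "comp_count f s n = card {xs. is_composition n xs \<and> f xs = s}"

lemma comp_count_0: "comp_count f s 0 = (if f [] = s then 1 else 0)"
proof -
  have "{xs. is_composition 0 xs \<and> f xs = s} = (if f [] = s then {[]} else {})"
    by (auto simp: is_composition_0_iff)
  then show ?thesis by (simp add: comp_count_def)
qed

lemma comp_count_Cons:
  assumes "0 < n" and \<delta>: "\<And>k xs. f (k # xs) = \<delta> k (f xs)" and "finite S" "\<And>xs. f xs \<in> S"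
  shows "comp_count f s n =
           (\<Sum>k=1..n. \<Sum>s'\<in>S. if \<delta> k s' = s then comp_count f s' (n - k) else 0)"
proof -
  have "card {ys. is_composition m ys \<and> \<delta> k (f ys) = s} =
          (\<Sum>s'\<in>S. if \<delta> k s' = s then comp_count f s' m else 0)" for k m
  proof -
    have "{ys. is_composition m ys \<and> \<delta> k (f ys) = s} =
            (\<Union>s'\<in>{s'\<in>S. \<delta> k s' = s}. {ys. is_composition m ys \<and> f ys = s'})"
      using assms(4) by auto
    then have "card {ys. is_composition m ys \<and> \<delta> k (f ys) = s} =
                 (\<Sum>s'\<in>{s'\<in>S. \<delta> k s' = s}. comp_count f s' m)"
      unfolding comp_count_def
      by (simp add: card_UN_disjoint assms(3) finite_compositions disjoint_iff)
    then show ?thesis by (simp add: sum.inter_filter assms(3))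
  qed
  then show ?thesis
    using card_compositions_by_first_part[OF assms(1), of "\<lambda>xs. f xs = s"]
    by (simp add: comp_count_def \<delta>)
qed

definition step_series :: "(nat \<Rightarrow> 'a \<Rightarrow> 'a) \<Rightarrow> 'a \<Rightarrow> 'a \<Rightarrow> 'b::zero_neq_one fps" where
  "step_series \<delta> s' s = Abs_fps (\<lambda>k. if 0 < k \<and> \<delta> k s' = s then 1 else 0)"

definition count_series :: "(nat list \<Rightarrow> 'a) \<Rightarrow> 'a \<Rightarrow> 'b::comm_semiring_1 fps" where
  "count_series f s = Abs_fps (\<lambda>n. of_nat (comp_count f s n))"

lemma step_series_mult_nth:
  "(step_series \<delta> s' s * count_series f s') $ n =
     (\<Sum>k=1..n. if \<delta> k s' = s then of_nat (comp_count f s' (n - k)) else 0)"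
  unfolding fps_mult_nth by (simp add: step_series_def count_series_def sum.atLeast_Suc_atMost
      atLeast0AtMost[symmetric] flip: One_nat_def) (rule sum.cong; simp)

lemma count_series_eq:
  assumes "\<And>k xs. f (k # xs) = \<delta> k (f xs)" and "finite S" "\<And>xs. f xs \<in> S"
  shows "count_series f s =
           (if f [] = s then 1 else 0) + (\<Sum>s'\<in>S. step_series \<delta> s' s * count_series f s')"
proof (rule fps_ext)
  fix n
  show "count_series f s $ n =
          ((if f [] = s then 1 else 0) + (\<Sum>s'\<in>S. step_series \<delta> s' s * count_series f s')) $ n"
  proof (cases "n = 0")
    case True
    then show ?thesis
      by (simp add: count_series_def step_series_def comp_count_0 fps_sum_nth)
  next
    case False
    then have "comp_count f s n =
        (\<Sum>k=1..n. \<Sum>s'\<in>S. if \<delta> k s' = s then comp_count f s' (n - k) else 0)"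
      using assms by (intro comp_count_Cons) auto
    then have "count_series f s $ n =
        (\<Sum>s'\<in>S. \<Sum>k=1..n. if \<delta> k s' = s then of_nat (comp_count f s' (n - k)) else 0)"
      by (simp add: count_series_def of_nat_sum sum.swap[of _ S] if_distrib[of of_nat] cong: if_cong)
    then show ?thesis
      using False by (simp add: fps_sum_nth step_series_mult_nth)
  qed
qed

lemma card_compositions_state_in:
  assumes "finite T"
  shows "card {xs. is_composition n xs \<and> f xs \<in> T} = (\<Sum>s\<in>T. comp_count f s n)"
proof -
  have "{xs. is_composition n xs \<and> f xs \<in> T} = (\<Union>s\<in>T. {xs. is_composition n xs \<and> f xs = s})"
    by auto
  then show ?thesis
    by (simp add: comp_count_def card_UN_disjoint assms finite_compositions disjoint_iff)
qed

section \<open>Containment of a pattern\<close>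

fun dominated_prefix :: "nat list \<Rightarrow> nat list \<Rightarrow> bool" where
  "dominated_prefix [] xs = True"
| "dominated_prefix (b # bs) [] = False"
| "dominated_prefix (b # bs) (x # xs) = (b \<le> x \<and> dominated_prefix bs xs)"

lemma dominated_prefix_Cons_left:
  "dominated_prefix (b # bs) xs \<longleftrightarrow> (\<exists>y ys. xs = y # ys \<and> b \<le> y \<and> dominated_prefix bs ys)"
  by (cases xs) auto

lemma dominated_prefix_iff:
  "dominated_prefix bs xs \<longleftrightarrow> length bs \<le> length xs \<and> (\<forall>j<length bs. bs ! j \<le> xs ! j)"
proof (induction bs xs rule: dominated_prefix.induct)
  case (3 b bs x xs)
  then show ?case by (auto simp: All_less_Suc2)
qed auto

lemma comp_includes_iff_drop:
  "comp_includes xs bs \<longleftrightarrow> (\<exists>i. dominated_prefix bs (drop i xs))"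
proof
  assume "comp_includes xs bs"
  then obtain i where "i + length bs \<le> length xs" "\<forall>j<length bs. bs ! j \<le> xs ! (i + j)"
    unfolding comp_includes_def by blast
  then have "dominated_prefix bs (drop i xs)" by (simp add: dominated_prefix_iff)
  then show "\<exists>i. dominated_prefix bs (drop i xs)" ..
next
  assume "\<exists>i. dominated_prefix bs (drop i xs)"
  then obtain i where i: "dominated_prefix bs (drop i xs)" ..
  show "comp_includes xs bs"
  proof (cases "bs = []")
    case False
    with i have len: "length bs \<le> length xs - i" and le: "\<forall>j<length bs. bs ! j \<le> xs ! (i + j)"
      by (auto simp: dominated_prefix_iff add.commute)
    from len False have "i + length bs \<le> length xs" by (cases bs) auto
    with le show ?thesis unfolding comp_includes_def by auto
  qed (auto simp: comp_includes_def)
qed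

lemma comp_includes_Nil: "comp_includes [] bs \<longleftrightarrow> bs = []"
  by (auto simp: comp_includes_def)

lemma comp_includes_Cons:
  "comp_includes (x # xs) bs \<longleftrightarrow> dominated_prefix bs (x # xs) \<or> comp_includes xs bs"
proof -
  have "(\<exists>i. dominated_prefix bs (drop i (x # xs))) \<longleftrightarrow>
        dominated_prefix bs (x # xs) \<or> (\<exists>i. dominated_prefix bs (drop (Suc i) (x # xs)))"
    by (metis not0_implies_Suc drop0)
  then show ?thesis by (simp add: comp_includes_iff_drop)
qed

section \<open>The generating function\<close>

text \<open>The state of a composition is the length of the longest suffix of \<open>34543\<close> that is
  dominated by a prefix of it, and \<open>5\<close> once \<open>34543\<close> occurs.\<close>

definition state_34543 :: "nat list \<Rightarrow> nat" where
  "state_34543 xs =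
     (if comp_includes xs [3,4,5,4,3] then 5
      else if dominated_prefix [4,5,4,3] xs then 4
      else if dominated_prefix [5,4,3] xs then 3
      else if dominated_prefix [4,3] xs then 2
      else if dominated_prefix [3] xs then 1 else 0)"

definition step_34543 :: "nat \<Rightarrow> nat \<Rightarrow> nat" where
  "step_34543 k s =
     (if s = 5 then 5 else if k < 3 then 0 else if s = 4 then 5 else if s = 0 then 1
      else if k = 3 then 1 else if s = 1 then 2 else if s = 2 then (if k = 4 then 2 else 3) else 4)"

lemma state_34543_Cons: "state_34543 (k # xs) = step_34543 k (state_34543 xs)"
proof -
  have "dominated_prefix [4,3] xs" if "dominated_prefix [4,5,4,3] xs \<or> dominated_prefix [5,4,3] xs"
    using that by (auto simp: dominated_prefix_Cons_left)
  moreover have "dominated_prefix [3] xs" if "dominated_prefix [4,3] xs"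
    using that by (auto simp: dominated_prefix_Cons_left)
  ultimately show ?thesis
    unfolding state_34543_def step_34543_def comp_includes_Cons by auto
qed

lemma state_34543_le: "state_34543 xs \<le> 5"
  by (simp add: state_34543_def)

lemma state_34543_Nil: "state_34543 [] = 0"
  by (simp add: state_34543_def comp_includes_Nil)

lemma comp_avoids_34543_iff: "comp_avoids xs [3,4,5,4,3] \<longleftrightarrow> state_34543 xs \<le> 4"
  by (simp add: state_34543_def comp_avoids_def)

abbreviation \<Phi> :: "nat \<Rightarrow> 'a::comm_semiring_1 fps" where
  "\<Phi> \<equiv> count_series state_34543"

lemma step_series_34543:
  shows "\<And>s'. s' \<le> 4 \<Longrightarrow> step_series step_34543 s' 0 = fps_X + fps_X^2"
    and "step_series step_34543 0 1 = Abs_fps (\<lambda>k. if 3 \<le> k then 1 else 0)"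
    and "step_series step_34543 1 1 = fps_X^3" "step_series step_34543 2 1 = fps_X^3" "step_series step_34543 3 1 = fps_X^3"
    and "step_series step_34543 4 1 = 0"
    and "step_series step_34543 0 2 = 0" "step_series step_34543 1 2 = Abs_fps (\<lambda>k. if 4 \<le> k then 1 else 0)"
    and "step_series step_34543 2 2 = fps_X^4" "step_series step_34543 3 2 = 0" "step_series step_34543 4 2 = 0"
    and "step_series step_34543 0 3 = 0" "step_series step_34543 1 3 = 0" "step_series step_34543 2 3 = Abs_fps (\<lambda>k. if 5 \<le> k then 1 else 0)"
    and "step_series step_34543 3 3 = 0" "step_series step_34543 4 3 = 0"
    and "step_series step_34543 0 4 = 0" "step_series step_34543 1 4 = 0" "step_series step_34543 2 4 = 0"
    and "step_series step_34543 3 4 = Abs_fps (\<lambda>k. if 4 \<le> k then 1 else 0)" "step_series step_34543 4 4 = 0"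
    and "\<And>s. s \<le> 4 \<Longrightarrow> step_series step_34543 5 s = 0"
  by (auto intro!: fps_ext simp: step_series_def step_34543_def)

lemma one_minus_X_mult_tail:
  fixes G :: "'a::comm_ring_1 fps"
  shows "(1 - fps_X) * (Abs_fps (\<lambda>k. if m \<le> k then 1 else 0) * G) = fps_X ^ m * G"
proof -
  have "(1 - fps_X) * Abs_fps (\<lambda>k. if m \<le> k then 1 else 0) = (fps_X ^ m :: 'a fps)"
    by (rule fps_ext) (auto simp: left_diff_distrib)
  then show ?thesis by (simp flip: mult.assoc)
qed

lemma count_series_34543_system:
  shows "\<Phi> 0 = 1 + (fps_X + fps_X^2) * (\<Phi> 0 + \<Phi> 1 + \<Phi> 2 + \<Phi> 3 + (\<Phi> 4 :: 'a::comm_ring_1 fps))"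
    and "(1 - fps_X) * \<Phi> 1 = fps_X^3 * \<Phi> 0 + (1 - fps_X) * fps_X^3 * (\<Phi> 1 + \<Phi> 2 + (\<Phi> 3 :: 'a fps))"
    and "(1 - fps_X) * \<Phi> 2 = fps_X^4 * \<Phi> 1 + (1 - fps_X) * fps_X^4 * (\<Phi> 2 :: 'a fps)"
    and "(1 - fps_X) * \<Phi> 3 = fps_X^5 * (\<Phi> 2 :: 'a fps)"
    and "(1 - fps_X) * \<Phi> 4 = fps_X^4 * (\<Phi> 3 :: 'a fps)"
proof -
  have sum6: "(\<Sum>s'\<le>5. g s') = g 0 + g 1 + g 2 + g 3 + g 4 + g 5" for g :: "nat \<Rightarrow> 'a fps"
    by (simp add: atMost_Suc eval_nat_numeral ac_simps)
  have col: "\<Phi> s = (if s = 0 then 1 else 0) + (step_series step_34543 0 s * \<Phi> 0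
      + step_series step_34543 1 s * \<Phi> 1 + step_series step_34543 2 s * \<Phi> 2
      + step_series step_34543 3 s * \<Phi> 3 + step_series step_34543 4 s * \<Phi> 4
      + step_series step_34543 5 s * (\<Phi> 5 :: 'a fps))" for s
  proof -
    have "\<Phi> s = (if state_34543 [] = s then 1 else 0) +
        (\<Sum>s'\<le>5. step_series step_34543 s' s * (\<Phi> s' :: 'a fps))"
      by (rule count_series_eq) (simp_all add: state_34543_Cons state_34543_le)
    then show ?thesis unfolding sum6 state_34543_Nil eq_commute[of 0 s] .
  qed
  show "\<Phi> 0 = 1 + (fps_X + fps_X^2) * (\<Phi> 0 + \<Phi> 1 + \<Phi> 2 + \<Phi> 3 + (\<Phi> 4 :: 'a fps))"
    by (subst col, simp only: step_series_34543) (simp add: algebra_simps)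
  show "(1 - fps_X) * \<Phi> 1 = fps_X^3 * \<Phi> 0 + (1 - fps_X) * fps_X^3 * (\<Phi> 1 + \<Phi> 2 + (\<Phi> 3 :: 'a fps))"
    by (subst col, simp only: step_series_34543 distrib_left one_minus_X_mult_tail)
      (simp add: algebra_simps)
  show "(1 - fps_X) * \<Phi> 2 = fps_X^4 * \<Phi> 1 + (1 - fps_X) * fps_X^4 * (\<Phi> 2 :: 'a fps)"
    by (subst col, simp only: step_series_34543 distrib_left one_minus_X_mult_tail)
      (simp add: algebra_simps)
  show "(1 - fps_X) * \<Phi> 3 = fps_X^5 * (\<Phi> 2 :: 'a fps)"
    by (subst col, simp only: step_series_34543 distrib_left one_minus_X_mult_tail) simp
  show "(1 - fps_X) * \<Phi> 4 = fps_X^4 * (\<Phi> 3 :: 'a fps)"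
    by (subst col, simp only: step_series_34543 distrib_left one_minus_X_mult_tail) simp
qed

lemma a34543_series:
  "Abs_fps (\<lambda>n. of_nat (a34543 n)) = \<Phi> 0 + \<Phi> 1 + \<Phi> 2 + \<Phi> 3 + (\<Phi> 4 :: 'a::comm_semiring_1 fps)"
proof (rule fps_ext)
  fix n
  have "a34543 n = card {xs. is_composition n xs \<and> state_34543 xs \<in> {..4}}"
    by (simp add: a34543_def comp_avoids_34543_iff)
  also have "\<dots> = (\<Sum>s\<le>4. comp_count state_34543 s n)"
    by (rule card_compositions_state_in) simp
  finally show "Abs_fps (\<lambda>n. of_nat (a34543 n)) $ n = (\<Phi> 0 + \<Phi> 1 + \<Phi> 2 + \<Phi> 3 + (\<Phi> 4 :: 'a fps)) $ n"
    by (simp add: count_series_def atMost_Suc eval_nat_numeral ac_simps)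
qed

text \<open>The cofactors below, found by eliminating \<open>F1, \<dots>, F4\<close> with a computer algebra system,
  exhibit the claimed identity as a combination of the five equations.\<close>

lemma linear_system_34543_solution:
  fixes x F0 F1 F2 F3 F4 :: "'a::idom"
  assumes e0: "F0 = 1 + (x + x^2) * (F0 + F1 + F2 + F3 + F4)"
    and e1: "(1 - x) * F1 = x^3 * F0 + (1 - x) * x^3 * (F1 + F2 + F3)"
    and e2: "(1 - x) * F2 = x^4 * F1 + (1 - x) * x^4 * F2"
    and e3: "(1 - x) * F3 = x^5 * F2"
    and e4: "(1 - x) * F4 = x^4 * F3"
  shows "(F0 + F1 + F2 + F3 + F4) * (x^18 + x^17 - x^16 + 2*x^14 - x^13 - 2*x^11 + 3*x^10
              - x^9 + 2*x^8 - 5*x^7 + 4*x^6 - x^5 - 2*x^4 + 7*x^3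
              - 9*x^2 + 5*x - 1) = - (1 - 4*x + 6*x^2 - 4*x^3 + x^4 + x^16 + x^13 - x^14
              + x^9 - 2*x^10 + x^11 + x^5 - 3*x^6 + 3*x^7 - x^8)"
proof -
  have "(F0 + F1 + F2 + F3 + F4) * (x^18 + x^17 - x^16 + 2*x^14 - x^13 - 2*x^11 + 3*x^10
              - x^9 + 2*x^8 - 5*x^7 + 4*x^6 - x^5 - 2*x^4 + 7*x^3
              - 9*x^2 + 5*x - 1) + (1 - 4*x + 6*x^2 - 4*x^3 + x^4 + x^16 + x^13 - x^14
              + x^9 - 2*x^10 + x^11 + x^5 - 3*x^6 + 3*x^7 - x^8)
     = (-1 + 4*x - 6*x^2 + 4*x^3 - x^4 - x^5 + 3*x^6 - 3*x^7 + x^8 - x^9 + 2*x^10 - x^11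
          - x^13 + x^14 - x^16)
         * (F0 - (1 + (x + x^2) * (F0 + F1 + F2 + F3 + F4)))
     + (-1 + 3*x - 3*x^2 + x^3 - x^5 + 2*x^6 - x^7 - x^9 + x^10 - x^13)
         * ((1 - x) * F1 - (x^3 * F0 + (1 - x) * x^3 * (F1 + F2 + F3)))
     + (-1 + 3*x - 3*x^2 + x^3 - x^5 + 2*x^6 - x^7 - x^9 + x^10 + x^12 - x^13)
         * ((1 - x) * F2 - (x^4 * F1 + (1 - x) * x^4 * F2))
     + (-1 + 3*x - 3*x^2 + x^3 - x^5 + 2*x^6 - x^8 - x^9 + x^10 + x^12 - x^13)
         * ((1 - x) * F3 - x^5 * F2)
     + (-1 + 3*x - 3*x^2 + 2*x^3 - 2*x^4 + 2*x^6 - x^7 + x^8 - 2*x^9 + x^10 + x^12 - x^13)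
         * ((1 - x) * F4 - x^4 * F3)"
    by algebra
  also have "\<dots> = 0" using e0 e1 e2 e3 e4 by simp
  finally show ?thesis using eq_neg_iff_add_eq_0 by blast
qed

definition denom_34543 :: "'a::comm_ring_1 fps" where
  "denom_34543 = fps_X^18 + fps_X^17 - fps_X^16 + 2*fps_X^14 - fps_X^13 - 2*fps_X^11 + 3*fps_X^10
              - fps_X^9 + 2*fps_X^8 - 5*fps_X^7 + 4*fps_X^6 - fps_X^5 - 2*fps_X^4 + 7*fps_X^3
              - 9*fps_X^2 + 5*fps_X - 1"

definition numer_34543 :: "'a::comm_ring_1 fps" where
  "numer_34543 = 1 - 4*fps_X + 6*fps_X^2 - 4*fps_X^3 + fps_X^4 + fps_X^16 + fps_X^13 - fps_X^14
              + fps_X^9 - 2*fps_X^10 + fps_X^11 + fps_X^5 - 3*fps_X^6 + 3*fps_X^7 - fps_X^8"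

lemma a34543_series_mult_denom:
  "Abs_fps (\<lambda>n. of_nat (a34543 n)) * denom_34543 = - (numer_34543 :: 'a::idom fps)"
  unfolding a34543_series denom_34543_def numer_34543_def
  by (rule linear_system_34543_solution[OF count_series_34543_system])

lemma a34543_gf:
  "Abs_fps (\<lambda>n. real (a34543 n)) = - numer_34543 / denom_34543"
proof -
  have unit: "denom_34543 $ 0 \<noteq> (0 :: real)" by (simp add: denom_34543_def)
  have "- numer_34543 / denom_34543 = Abs_fps (\<lambda>n. real (a34543 n)) * denom_34543 * inverse denom_34543"
    by (simp add: fps_divide_unit[OF unit] a34543_series_mult_denom)
  also have "\<dots> = Abs_fps (\<lambda>n. real (a34543 n))"
    by (simp add: mult.assoc inverse_mult_eq_1'[OF unit])
  finally show ?thesis ..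
qed

text \<open>Coefficient lists start with the constant term; \<open>denom_coeffs\<close> is the \<^emph>\<open>negated\<close>
  denominator, normalised to constant term \<open>1\<close>.\<close>

definition denom_coeffs :: "'a::comm_ring_1 list" where
  "denom_coeffs = [1, -5, 9, -7, 2, 1, -4, 5, -2, 1, -3, 2, 0, 1, -2, 0, 1, -1, -1]"

definition numer_coeffs :: "'a::comm_ring_1 list" where
  "numer_coeffs = [1, -4, 6, -4, 1, 1, -3, 3, -1, 1, -2, 1, 0, 1, -1, 0, 1]"

lemma fps_of_poly_denom_coeffs: "fps_of_poly (Poly denom_coeffs) = - denom_34543"
  by (simp add: denom_coeffs_def denom_34543_def) (simp add: monom_Suc monom_0 eval_nat_numeral)

lemma fps_of_poly_numer_coeffs: "fps_of_poly (Poly numer_coeffs) = numer_34543"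
  by (simp add: numer_coeffs_def numer_34543_def) (simp add: monom_Suc monom_0 eval_nat_numeral)

lemma a34543_series_mult_denom_poly:
  "Abs_fps (\<lambda>n. of_nat (a34543 n)) * fps_of_poly (Poly denom_coeffs) =
     fps_of_poly (Poly (numer_coeffs :: 'a::idom list))"
  by (simp add: fps_of_poly_denom_coeffs fps_of_poly_numer_coeffs a34543_series_mult_denom)

section \<open>Initial values\<close>

fun quotient_prefix_rev :: "'a::comm_ring_1 list \<Rightarrow> 'a list \<Rightarrow> nat \<Rightarrow> 'a list" where
  "quotient_prefix_rev ps qs 0 = []"
| "quotient_prefix_rev ps qs (Suc n) =
     (let cs = quotient_prefix_rev ps qs n in (nth_default 0 ps n - sum_list (map2 (*) qs cs)) # cs)"

lemma sum_list_map2_times: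
  "sum_list (map2 (*) xs ys) = (\<Sum>j<min (length xs) (length ys). xs ! j * ys ! j)"
  by (simp add: sum_list_sum_nth atLeast0LessThan)

lemma quotient_prefix_rev_correct:
  fixes f :: "'a::comm_ring_1 fps"
  assumes "f * fps_of_poly (Poly (1 # qs)) = fps_of_poly (Poly ps)"
  shows "quotient_prefix_rev ps qs n = rev (map (($) f) [0..<n])"
proof (induction n)
  case (Suc n)
  have "sum_list (map2 (*) qs (rev (map (($) f) [0..<n]))) =
          (\<Sum>j<min (length qs) n. qs ! j * f $ (n - Suc j))"
    by (simp add: sum_list_map2_times rev_nth)
  also have "\<dots> = (\<Sum>j<n. nth_default 0 qs j * f $ (n - Suc j))"
    by (rule sum.mono_neutral_cong_left) (auto simp: nth_default_def)
  also have "\<dots> = (\<Sum>i<n. f $ i * nth_default 0 qs (n - Suc i))"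
    by (subst sum.nat_diff_reindex[symmetric]) (simp add: mult.commute Suc_diff_Suc)
  also have "\<dots> = nth_default 0 ps n - f $ n"
  proof -
    have "nth_default 0 ps n = (f * fps_of_poly (Poly (1 # qs))) $ n"
      using assms by simp
    also have "\<dots> = (\<Sum>i\<le>n. f $ i * nth_default 0 (1 # qs) (n - i))"
      by (simp add: fps_mult_nth atLeast0AtMost del: Poly.simps)
    also have "\<dots> = (\<Sum>i<n. f $ i * nth_default 0 qs (n - Suc i)) + f $ n"
      by (auto simp: lessThan_Suc_atMost[symmetric] intro!: sum.cong simp flip: Suc_diff_Suc)
    finally show ?thesis by simp
  qed
  finally show ?case using Suc.IH by (simp add: Let_def)
qed simp

lemma a34543_values:
  "map a34543 [0..<31] =
     [1, 1, 2, 4, 8, 16, 32, 64, 128, 256, 512, 1024, 2048, 4096, 8192, 16384, 32768,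
      65536, 131072, 262143, 524281, 1048546, 2097050, 4194001, 8387784, 16775108,
      33549270, 67096623, 134189393, 268371074, 536726740]"
proof -
  have "map (\<lambda>n. int (a34543 n)) [0..<31] =
          rev (quotient_prefix_rev numer_coeffs
                 [-5, 9, -7, 2, 1, -4, 5, -2, 1, -3, 2, 0, 1, -2, 0, 1, -1, -1] 31)"
    unfolding quotient_prefix_rev_correct[OF
        a34543_series_mult_denom_poly[where 'a=int, unfolded denom_coeffs_def]]
    by simp
  also have "\<dots> =
     [1, 1, 2, 4, 8, 16, 32, 64, 128, 256, 512, 1024, 2048, 4096, 8192, 16384, 32768,
      65536, 131072, 262143, 524281, 1048546, 2097050, 4194001, 8387784, 16775108,
      33549270, 67096623, 134189393, 268371074, 536726740]"
    by code_simp
  finally have "map int (map a34543 [0..<31]) = map int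
     [1, 1, 2, 4, 8, 16, 32, 64, 128, 256, 512, 1024, 2048, 4096, 8192, 16384, 32768,
      65536, 131072, 262143, 524281, 1048546, 2097050, 4194001, 8387784, 16775108,
      33549270, 67096623, 134189393, 268371074, 536726740]"
    by (simp add: comp_def)
  then show ?thesis
    by (simp only: inj_map_eq_map[OF inj_of_nat])
qed

section \<open>Asymptotics from a dominant simple root\<close>

lemma fps_mult_linear_factor_nth:
  fixes H :: "'a::field fps"
  assumes "H * fps_of_poly [:1, -r:] = fps_of_poly P"
  shows "H $ n = (\<Sum>k\<le>n. coeff P k * r ^ (n - k))"
proof (induction n)
  case 0
  then show ?case using arg_cong[OF assms, of "\<lambda>F. F $ 0"] by simp
next
  case (Suc n)
  have "coeff P (Suc n) = (H * fps_of_poly [:1, -r:]) $ Suc n"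
    using assms by simp
  also have "\<dots> = H $ Suc n - r * H $ n"
    by (simp add: fps_of_poly_pCons fps_const_neg[symmetric] ring_distribs mult.left_commute[of H] del: fps_const_neg)
  finally have "H $ Suc n = coeff P (Suc n) + r * H $ n" by simp
  also have "r * H $ n = (\<Sum>k\<le>n. coeff P k * r ^ (Suc n - k))"
    by (simp add: Suc.IH sum_distrib_left Suc_diff_le mult_ac)
  finally show ?case by (simp add: add.commute)
qed

lemma fps_mult_linear_factor_nth_eventually:
  fixes H :: "'a::field fps"
  assumes "H * fps_of_poly [:1, -r:] = fps_of_poly P" "r \<noteq> 0" "degree P \<le> n"
  shows "H $ n = r ^ n * poly P (1 / r)"
proof -
  have "H $ n = (\<Sum>k\<le>n. coeff P k * r ^ (n - k))"
    by (rule fps_mult_linear_factor_nth[OF assms(1)])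
  also have "\<dots> = r ^ n * (\<Sum>k\<le>n. coeff P k * (1 / r) ^ k)"
    by (auto simp: sum_distrib_left power_diff assms(2) power_one_over field_simps intro!: sum.cong)
  also have "(\<Sum>k\<le>n. coeff P k * (1 / r) ^ k) = poly P (1 / r)"
    unfolding poly_altdef using assms(3) by (intro sum.mono_neutral_right) (auto simp: coeff_eq_0)
  finally show ?thesis .
qed

lemma geometric_fps_mult_linear_factor:
  "Abs_fps (\<lambda>n. r ^ n) * fps_of_poly [:1, -r:] = (1 :: 'a::field fps)"
proof (rule fps_ext)
  fix n
  show "(Abs_fps (\<lambda>n. r ^ n) * fps_of_poly [:1, -r:]) $ n = (1 :: 'a fps) $ n"
    by (cases n) (simp_all add: fps_of_poly_pCons fps_const_neg[symmetric] ring_distribs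
        mult.left_commute[of "Abs_fps _"] del: fps_const_neg)
qed

lemma dominant_root_error_annihilated:
  fixes a :: "nat \<Rightarrow> 'a::field"
  assumes gf: "Abs_fps a * fps_of_poly D = fps_of_poly N"
    and factor: "D = [:1, -r:] * E" and "r \<noteq> 0" and "poly E (1 / r) \<noteq> 0"
    and "degree N \<le> n" "degree E \<le> n"
  defines "c \<equiv> poly N (1 / r) / poly E (1 / r)"
  shows "(Abs_fps (\<lambda>n. a n - c * r ^ n) * fps_of_poly E) $ n = 0"
proof -
  define R where "R = Abs_fps (\<lambda>n. r ^ n)"
  have "(Abs_fps a * fps_of_poly E) * fps_of_poly [:1, -r:] = fps_of_poly N"
    using gf unfolding factor fps_of_poly_mult by (simp only: mult_ac)
  then have AE: "(Abs_fps a * fps_of_poly E) $ n = r ^ n * poly N (1 / r)"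
    using assms by (intro fps_mult_linear_factor_nth_eventually) auto
  have "(R * fps_of_poly E) * fps_of_poly [:1, -r:] = fps_of_poly E"
    using geometric_fps_mult_linear_factor[of r] by (simp add: R_def mult_ac)
  then have RE: "(R * fps_of_poly E) $ n = r ^ n * poly E (1 / r)"
    using assms by (intro fps_mult_linear_factor_nth_eventually) auto
  have "Abs_fps (\<lambda>n. a n - c * r ^ n) = Abs_fps a - fps_const c * R"
    by (rule fps_ext) (simp add: R_def)
  then have "(Abs_fps (\<lambda>n. a n - c * r ^ n) * fps_of_poly E) $ n =
               (Abs_fps a * fps_of_poly E) $ n - c * (R * fps_of_poly E) $ n"
    by (simp add: left_diff_distrib mult.assoc)
  also have "\<dots> = 0"
    using AE RE assms(4) by (simp add: c_def)
  finally show ?thesis .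
qed

lemma fps_mult_poly_nth_eq_0:
  assumes "\<And>n. K \<le> n \<Longrightarrow> (F * fps_of_poly E) $ n = 0" and "K + degree S \<le> n"
  shows "(F * fps_of_poly (S * E)) $ n = 0"
proof -
  have "F * fps_of_poly (S * E) = (F * fps_of_poly E) * fps_of_poly S"
    by (simp add: fps_of_poly_mult mult_ac)
  then have "(F * fps_of_poly (S * E)) $ n = (\<Sum>i=0..n. (F * fps_of_poly E) $ i * coeff S (n - i))"
    by (simp only: fps_mult_nth fps_of_poly_nth)
  also have "\<dots> = 0"
  proof (intro sum.neutral ballI)
    fix i assume "i \<in> {0..n}"
    show "(F * fps_of_poly E) $ i * coeff S (n - i) = 0"
    proof (cases "K \<le> i")
      case False
      then have "degree S < n - i" using assms(2) by linarith
      then show ?thesis by (simp add: coeff_eq_0)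
    qed (simp add: assms(1))
  qed
  finally show ?thesis .
qed

lemma fps_mult_poly_nth:
  fixes e :: "nat \<Rightarrow> 'a::comm_semiring_1"
  assumes "degree p \<le> n"
  shows "(Abs_fps e * fps_of_poly p) $ n = (\<Sum>k\<le>degree p. coeff p k * e (n - k))"
proof -
  have "(Abs_fps e * fps_of_poly p) $ n = (\<Sum>k\<le>n. coeff p k * e (n - k))"
    by (simp add: mult.commute[of "Abs_fps e"] fps_mult_nth atLeast0AtMost)
  also have "\<dots> = (\<Sum>k\<le>degree p. coeff p k * e (n - k))"
    using assms by (intro sum.mono_neutral_right) (auto simp: coeff_eq_0)
  finally show ?thesis .
qed

lemma poly_recurrence_growth_bound:
  fixes e :: "nat \<Rightarrow> real" and \<tau> :: "real poly"
  assumes rec: "\<And>n. N \<le> n \<Longrightarrow> (Abs_fps e * fps_of_poly \<tau>) $ n = 0"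
    and \<tau>0: "coeff \<tau> 0 = 1" and "degree \<tau> \<le> M" and "M \<le> N" and "0 < \<sigma>"
    and dominated: "(\<Sum>k=1..M. \<bar>coeff \<tau> k\<bar> * \<sigma> ^ k) \<le> 1"
  shows "\<exists>K. \<forall>n. \<bar>e n\<bar> * \<sigma> ^ n \<le> K"
proof -
  define K where "K = (\<Sum>n<N. \<bar>e n\<bar> * \<sigma> ^ n)"
  have "0 \<le> K" unfolding K_def using \<open>0 < \<sigma>\<close> by (intro sum_nonneg) auto
  have "\<bar>e n\<bar> * \<sigma> ^ n \<le> K" for n
  proof (induction n rule: less_induct)
    case (less n)
    show ?case
    proof (cases "n < N")
      case True
      then show ?thesis unfolding K_def using \<open>0 < \<sigma>\<close> by (intro member_le_sum) auto
    next
      case False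
      then have "M \<le> n" using \<open>M \<le> N\<close> by simp
      have "(\<Sum>k\<le>M. coeff \<tau> k * e (n - k)) = (\<Sum>k\<le>degree \<tau>. coeff \<tau> k * e (n - k))"
        using \<open>degree \<tau> \<le> M\<close> by (intro sum.mono_neutral_right) (auto simp: coeff_eq_0)
      also have "\<dots> = (Abs_fps e * fps_of_poly \<tau>) $ n"
        using \<open>degree \<tau> \<le> M\<close> \<open>M \<le> n\<close> by (simp add: fps_mult_poly_nth)
      finally have "0 = (\<Sum>k\<le>M. coeff \<tau> k * e (n - k))"
        using rec False by simp
      also have "\<dots> = e n + (\<Sum>k=1..M. coeff \<tau> k * e (n - k))"
        by (simp add: \<tau>0 atMost_atLeast0 sum.atLeast_Suc_atMost)
      finally have "e n = - (\<Sum>k=1..M. coeff \<tau> k * e (n - k))"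
        by linarith
      then have "\<bar>e n\<bar> * \<sigma> ^ n = \<bar>\<Sum>k=1..M. coeff \<tau> k * e (n - k)\<bar> * \<sigma> ^ n"
        by simp
      also have "\<dots> \<le> (\<Sum>k=1..M. \<bar>coeff \<tau> k * e (n - k)\<bar>) * \<sigma> ^ n"
        using \<open>0 < \<sigma>\<close> by (intro mult_right_mono sum_abs) auto
      also have "\<dots> = (\<Sum>k=1..M. (\<bar>coeff \<tau> k\<bar> * \<sigma> ^ k) * (\<bar>e (n - k)\<bar> * \<sigma> ^ (n - k)))"
        unfolding sum_distrib_right
      proof (intro sum.cong refl)
        fix k assume "k \<in> {1..M}"
        then have "\<sigma> ^ n = \<sigma> ^ k * \<sigma> ^ (n - k)"
          using \<open>M \<le> n\<close> by (simp flip: power_add)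
        then show "\<bar>coeff \<tau> k * e (n - k)\<bar> * \<sigma> ^ n =
                     \<bar>coeff \<tau> k\<bar> * \<sigma> ^ k * (\<bar>e (n - k)\<bar> * \<sigma> ^ (n - k))"
          by (simp add: abs_mult mult_ac)
      qed
      also have "\<dots> \<le> (\<Sum>k=1..M. (\<bar>coeff \<tau> k\<bar> * \<sigma> ^ k) * K)"
        using \<open>M \<le> n\<close> \<open>0 < \<sigma>\<close> by (intro sum_mono mult_left_mono less.IH) auto
      also have "\<dots> \<le> K"
        using mult_right_mono[OF dominated \<open>0 \<le> K\<close>] by (simp flip: sum_distrib_right)
      finally show ?thesis .
    qed
  qed
  then show ?thesis by blast
qed

lemma limit_if_error_bounded:
  fixes a :: "nat \<Rightarrow> real"
  assumes "\<And>n. \<bar>a n - c * r ^ n\<bar> * \<sigma> ^ n \<le> K" and "0 < r" "0 < \<sigma>" "1 < \<sigma> * r"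
  shows "(\<lambda>n. a n / r ^ n) \<longlonglongrightarrow> c"
proof -
  define q where "q = 1 / (\<sigma> * r)"
  have q: "0 < q" "q < 1" using assms(2-4) by (auto simp: q_def field_simps)
  have "(\<lambda>n. a n / r ^ n - c) \<longlonglongrightarrow> 0"
  proof (rule Lim_null_comparison)
    show "(\<lambda>n. K * q ^ n) \<longlonglongrightarrow> 0"
      using q by (intro tendsto_mult_right_zero LIMSEQ_power_zero) auto
    have "norm (a n / r ^ n - c) = (\<bar>a n - c * r ^ n\<bar> * \<sigma> ^ n) * q ^ n" for n
      using assms(2,3) by (simp add: q_def abs_divide power_divide power_mult_distrib field_simps)
    then show "\<forall>\<^sub>F n in sequentially. norm (a n / r ^ n - c) \<le> K * q ^ n"
      using assms(1) q by (auto intro!: always_eventually mult_right_mono)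
  qed
  then show ?thesis by (simp add: LIM_zero_iff)
qed

lemma ratio_and_asymp_equiv_if_limit:
  fixes a :: "nat \<Rightarrow> real"
  assumes lim: "(\<lambda>n. a n / r ^ n) \<longlonglongrightarrow> c" and "c \<noteq> 0" "0 < r"
  shows "(\<lambda>n. a (Suc n) / a n) \<longlonglongrightarrow> r" and "a \<sim>[at_top] (\<lambda>n. c * r ^ n)"
proof -
  have "(\<lambda>n. r * (a (Suc n) / r ^ Suc n) / (a n / r ^ n)) \<longlonglongrightarrow> r * c / c"
    using assms by (intro tendsto_intros LIMSEQ_Suc) auto
  also have "r * c / c = r"
    using \<open>c \<noteq> 0\<close> by simp
  also have "(\<lambda>n. r * (a (Suc n) / r ^ Suc n) / (a n / r ^ n)) = (\<lambda>n. a (Suc n) / a n)"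
  proof
    fix n
    show "r * (a (Suc n) / r ^ Suc n) / (a n / r ^ n) = a (Suc n) / a n"
      using \<open>0 < r\<close> by (cases "a n = 0") (simp_all add: field_simps)
  qed
  finally show "(\<lambda>n. a (Suc n) / a n) \<longlonglongrightarrow> r" .
  have "(\<lambda>n. (a n / r ^ n) / c) \<longlonglongrightarrow> c / c"
    using assms by (intro tendsto_intros) auto
  moreover have "(a n / r ^ n) / c = a n / (c * r ^ n)" for n
    by (simp add: field_simps)
  ultimately show "a \<sim>[at_top] (\<lambda>n. c * r ^ n)"
    using \<open>c \<noteq> 0\<close> by (intro asymp_equivI') (simp add: mult.commute)
qed

text \<open>The multiplier \<open>S\<close> is a certificate: if \<open>S * E\<close> is dominated by its constant term on
  the circle of radius \<open>\<sigma>\<close>, the error \<open>a n - c * r ^ n\<close> (which \<open>E\<close> annihilates) is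
  \<open>O(\<sigma>\<^sup>-\<^sup>n)\<close>, hence negligible against \<open>r ^ n\<close>.\<close>

lemma dominant_root_limit:
  fixes a :: "nat \<Rightarrow> real" and D N E S :: "real poly"
  assumes gf: "Abs_fps a * fps_of_poly D = fps_of_poly N"
    and factor: "D = [:1, -r:] * E" and "0 < r" and "poly E (1 / r) \<noteq> 0"
    and "coeff (S * E) 0 = 1" "degree (S * E) \<le> M" "0 < \<sigma>" "1 < \<sigma> * r"
    and dominated: "(\<Sum>k=1..M. \<bar>coeff (S * E) k\<bar> * \<sigma> ^ k) \<le> 1"
  shows "(\<lambda>n. a n / r ^ n) \<longlonglongrightarrow> poly N (1 / r) / poly E (1 / r)"
proof -
  define c where "c = poly N (1 / r) / poly E (1 / r)"
  define e where "e = (\<lambda>n. a n - c * r ^ n)"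
  define K0 where "K0 = max (degree N) (degree E)"
  have "(Abs_fps e * fps_of_poly E) $ n = 0" if "K0 \<le> n" for n
    unfolding e_def c_def using that assms(3,4)
    by (intro dominant_root_error_annihilated[OF gf factor]) (auto simp: K0_def)
  then have "(Abs_fps e * fps_of_poly (S * E)) $ n = 0" if "max (K0 + degree S) M \<le> n" for n
    using that by (intro fps_mult_poly_nth_eq_0) auto
  then obtain K where "\<bar>e n\<bar> * \<sigma> ^ n \<le> K" for n
    using poly_recurrence_growth_bound[OF _ assms(5,6) _ assms(7) dominated] by (metis max.cobounded2)
  then show ?thesis
    unfolding c_def[symmetric] using assms(3,7,8) by (intro limit_if_error_bounded) (auto simp: e_def)
qed

section \<open>Numerical certificates\<close>

fun horner_abs :: "real \<Rightarrow> real list \<Rightarrow> real" where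
  "horner_abs m [] = 0"
| "horner_abs m (c # cs) = \<bar>c\<bar> + m * horner_abs m cs"

fun horner_lip :: "real \<Rightarrow> real list \<Rightarrow> real" where
  "horner_lip m [] = 0"
| "horner_lip m (c # cs) = horner_abs m cs + m * horner_lip m cs"

lemma horner_abs_nonneg: "0 \<le> m \<Longrightarrow> 0 \<le> horner_abs m cs"
  by (induction cs) auto

lemma horner_lip_nonneg: "0 \<le> m \<Longrightarrow> 0 \<le> horner_lip m cs"
  by (induction cs) (auto simp: horner_abs_nonneg)

lemma abs_poly_Poly_le: "\<bar>x\<bar> \<le> m \<Longrightarrow> \<bar>poly (Poly cs) x\<bar> \<le> horner_abs m cs"
proof (induction cs)
  case (Cons c cs)
  have "\<bar>poly (Poly (c # cs)) x\<bar> \<le> \<bar>c\<bar> + \<bar>x\<bar> * \<bar>poly (Poly cs) x\<bar>"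
    by (simp add: abs_mult[symmetric] abs_triangle_ineq)
  also have "\<dots> \<le> \<bar>c\<bar> + m * horner_abs m cs"
    using Cons by (intro add_left_mono mult_mono) auto
  finally show ?case by simp
qed simp

lemma poly_Poly_lipschitz:
  assumes "\<bar>x\<bar> \<le> m" "\<bar>y\<bar> \<le> m"
  shows "\<bar>poly (Poly cs) x - poly (Poly cs) y\<bar> \<le> horner_lip m cs * \<bar>x - y\<bar>"
proof (induction cs)
  case (Cons c cs)
  have "poly (Poly (c # cs)) x - poly (Poly (c # cs)) y =
          (x - y) * poly (Poly cs) x + y * (poly (Poly cs) x - poly (Poly cs) y)"
    by (simp add: algebra_simps)
  then have "\<bar>poly (Poly (c # cs)) x - poly (Poly (c # cs)) y\<bar> \<le>
               \<bar>x - y\<bar> * \<bar>poly (Poly cs) x\<bar> + \<bar>y\<bar> * \<bar>poly (Poly cs) x - poly (Poly cs) y\<bar>"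
    by (metis abs_mult abs_triangle_ineq)
  also have "\<dots> \<le> \<bar>x - y\<bar> * horner_abs m cs + m * (horner_lip m cs * \<bar>x - y\<bar>)"
    using Cons assms abs_poly_Poly_le[of x m cs] by (intro add_mono mult_mono) auto
  finally show ?case by (simp add: algebra_simps)
qed simp

lemma horner_abs_drop_le: "horner_abs 1 (drop k cs) \<le> horner_abs 1 cs"
proof (induction cs arbitrary: k)
  case (Cons c cs)
  have "horner_abs 1 (drop k' cs) \<le> horner_abs 1 (c # cs)" for k'
    using Cons.IH[of k'] by (simp add: add_increasing)
  then show ?case by (cases k) auto
qed simp

lemma horner_lip_drop_le: "horner_lip 1 (drop k cs) \<le> horner_lip 1 cs"
proof (induction cs arbitrary: k)
  case (Cons c cs)
  have "horner_lip 1 (drop k' cs) \<le> horner_lip 1 (c # cs)" for k'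
    using Cons.IH[of k'] by (simp add: add_increasing horner_abs_nonneg)
  then show ?case by (cases k) auto
qed simp

lemma sum_abs_nth_default_le: "(\<Sum>j\<le>k. \<bar>nth_default 0 cs j\<bar>) \<le> horner_abs 1 cs"
proof (induction cs arbitrary: k)
  case (Cons c cs)
  show ?case
  proof (cases k)
    case (Suc k')
    then show ?thesis using Cons[of k'] by (simp add: sum.atMost_Suc_shift del: sum.atMost_Suc)
  qed (simp add: horner_abs_nonneg)
qed simp

lemma coeff_synthetic_div_Poly:
  "coeff (synthetic_div (Poly cs) x) k = poly (Poly (drop (Suc k) cs)) x"
  by (induction cs arbitrary: k) (auto simp: coeff_pCons split: nat.split)

lemma synthetic_div_coeff_lipschitz:
  assumes "\<bar>x\<bar> \<le> 1" "\<bar>y\<bar> \<le> 1"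
  shows "\<bar>x * coeff (synthetic_div (Poly cs) x) k - y * coeff (synthetic_div (Poly cs) y) k\<bar>
           \<le> horner_lip 1 cs * \<bar>x - y\<bar>"
proof (cases cs)
  case (Cons c cs')
  have "\<bar>x * coeff (synthetic_div (Poly cs) x) k - y * coeff (synthetic_div (Poly cs) y) k\<bar> =
          \<bar>poly (Poly (0 # drop k cs')) x - poly (Poly (0 # drop k cs')) y\<bar>"
    by (simp only: coeff_synthetic_div_Poly Cons) simp
  also have "\<dots> \<le> horner_lip 1 (0 # drop k cs') * \<bar>x - y\<bar>"
    by (rule poly_Poly_lipschitz[OF assms])
  also have "\<dots> \<le> horner_lip 1 cs * \<bar>x - y\<bar>"
    using horner_abs_drop_le[of k cs'] horner_lip_drop_le[of k cs']
    by (intro mult_right_mono) (auto simp: Cons)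
  finally show ?thesis .
qed (simp add: coeff_synthetic_div_Poly)

lemma linear_factor_synthetic_div:
  fixes D :: "'a::field poly"
  assumes "poly D \<rho> = 0" "\<rho> \<noteq> 0"
  shows "D = [:1, - (1 / \<rho>):] * smult (- \<rho>) (synthetic_div D \<rho>)"
proof -
  have "D = [:- \<rho>, 1:] * synthetic_div D \<rho>"
    using synthetic_div_correct'[of \<rho> D] assms(1) by simp
  also have "[:- \<rho>, 1:] = smult (- \<rho>) [:1, - (1 / \<rho>):]"
    using assms(2) by simp
  finally show ?thesis by (simp only: mult_smult_left mult_smult_right)
qed

lemma poly_synthetic_div_at_root:
  fixes D :: "'a::field poly"
  assumes "poly D \<rho> = 0"
  shows "poly (synthetic_div D \<rho>) \<rho> = poly (pderiv D) \<rho>"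
proof -
  define Q where "Q = synthetic_div D \<rho>"
  have "D = [:- \<rho>, 1:] * Q"
    using synthetic_div_correct'[of \<rho> D] assms by (simp add: Q_def)
  then have "pderiv D = pderiv ([:- \<rho>, 1:] * Q)"
    by (rule arg_cong)
  also have "\<dots> = [:- \<rho>, 1:] * pderiv Q + Q"
    by (simp only: pderiv_mult) (simp add: pderiv_pCons)
  finally show ?thesis by (simp add: Q_def)
qed

definition xderiv_denom_coeffs :: "'a::comm_ring_1 list" where
  "xderiv_denom_coeffs =
     [0, 5, -18, 21, -8, -5, 24, -35, 16, -9, 30, -22, 0, -13, 28, 0, -16, 17, 18]"

lemma poly_xderiv_denom_coeffs:
  "poly (Poly xderiv_denom_coeffs) x = - x * poly (pderiv (Poly denom_coeffs)) (x :: real)"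
  by (simp add: xderiv_denom_coeffs_def denom_coeffs_def pderiv_pCons algebra_simps)

definition deflated_denom :: "real \<Rightarrow> real poly" where
  "deflated_denom x = smult (- x) (synthetic_div (Poly denom_coeffs) x)"

text \<open>An approximation of \<open>(1 - x)\<^sup>-\<^sup>3\<close>: near the dominant root the deflated denominator
  starts like \<open>(1 - x)\<^sup>3\<close>, and this multiplier cancels that factor.\<close>

definition dominance_multiplier :: "real list" where
  "dominance_multiplier = [1, 3, 6, 10, 15, 20, 24, 26, 25, 19, 6]"

lemma degrees_34543:
  "degree (Poly denom_coeffs :: real poly) = 18" "degree (Poly dominance_multiplier) = 10"
  by (simp_all add: denom_coeffs_def dominance_multiplier_def)

lemma degree_deflated_denom: "degree (deflated_denom x) \<le> 17"
  using degree_smult_le[of "- x" "synthetic_div (Poly denom_coeffs) x"]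
  by (simp add: deflated_denom_def degree_synthetic_div degrees_34543)

lemma horner_constants_34543:
  "horner_lip (5001/10000) numer_coeffs \<le> 15" "horner_lip (5001/10000) xderiv_denom_coeffs \<le> 55"
  "horner_lip 1 denom_coeffs = 285" "horner_abs 1 dominance_multiplier = 155"
  by (simp_all add: numer_coeffs_def xderiv_denom_coeffs_def denom_coeffs_def
      dominance_multiplier_def)

lemma denom_sign_change_34543:
  "0 < poly (Poly denom_coeffs) (562965996707165 / 2^50 :: real)"
  "poly (Poly denom_coeffs) (562965996707166 / 2^50 :: real) < 0"
  by (simp_all add: denom_coeffs_def)

lemma numer_bounds_34543:
  "6696404873893933 / 10^17 \<le> poly (Poly numer_coeffs) (562965996707165 / 2^50 :: real)"
  "poly (Poly numer_coeffs) (562965996707165 / 2^50 :: real) \<le> 6696404873893934 / 10^17"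
  by (simp_all add: numer_coeffs_def)

lemma xderiv_denom_bounds_34543:
  "13384965758739217 / 10^17 \<le> poly (Poly xderiv_denom_coeffs) (562965996707165 / 2^50 :: real)"
  "poly (Poly xderiv_denom_coeffs) (562965996707165 / 2^50 :: real) \<le> 13384965758739218 / 10^17"
  by (simp_all add: xderiv_denom_coeffs_def)

lemma denom_root_34543:
  obtains \<rho> :: real where "562965996707165 / 2^50 \<le> \<rho>" "\<rho> \<le> 562965996707166 / 2^50"
    and "poly (Poly denom_coeffs) \<rho> = 0"
  using IVT2[of "poly (Poly denom_coeffs)" "562965996707166 / 2^50 :: real" 0 "562965996707165 / 2^50"]
    denom_sign_change_34543 by auto

lemma bounds_near_denom_root_34543:
  fixes \<rho> :: real
  assumes "562965996707165 / 2^50 \<le> \<rho>" "\<rho> \<le> 562965996707166 / 2^50"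
  shows "6696404873893933 / 10^17 - 15/2^50 \<le> poly (Poly numer_coeffs) \<rho>"
    and "poly (Poly numer_coeffs) \<rho> \<le> 6696404873893934 / 10^17 + 15/2^50"
    and "13384965758739217 / 10^17 - 55/2^50 \<le> poly (Poly xderiv_denom_coeffs) \<rho>"
    and "poly (Poly xderiv_denom_coeffs) \<rho> \<le> 13384965758739218 / 10^17 + 55/2^50"
proof -
  let ?rlo = "562965996707165 / 2^50 :: real"
  have lipschitz: "\<bar>poly (Poly cs) \<rho> - poly (Poly cs) ?rlo\<bar> \<le> horner_lip (5001/10000) cs * (1/2^50)"
    for cs
  proof -
    have "\<bar>poly (Poly cs) \<rho> - poly (Poly cs) ?rlo\<bar> \<le> horner_lip (5001/10000) cs * \<bar>\<rho> - ?rlo\<bar>"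
      using assms by (intro poly_Poly_lipschitz) auto
    also have "\<dots> \<le> horner_lip (5001/10000) cs * (1/2^50)"
      using assms by (intro mult_left_mono horner_lip_nonneg) auto
    finally show ?thesis .
  qed
  have "\<bar>poly (Poly numer_coeffs) \<rho> - poly (Poly numer_coeffs) ?rlo\<bar> \<le> 15/2^50"
    by (rule order.trans[OF lipschitz]) (simp add: horner_constants_34543)
  then show "6696404873893933 / 10^17 - 15/2^50 \<le> poly (Poly numer_coeffs) \<rho>"
    and "poly (Poly numer_coeffs) \<rho> \<le> 6696404873893934 / 10^17 + 15/2^50"
    using numer_bounds_34543 unfolding abs_le_iff by linarith+
  have "\<bar>poly (Poly xderiv_denom_coeffs) \<rho> - poly (Poly xderiv_denom_coeffs) ?rlo\<bar> \<le> 55/2^50"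
    by (rule order.trans[OF lipschitz]) (simp add: horner_constants_34543)
  then show "13384965758739217 / 10^17 - 55/2^50 \<le> poly (Poly xderiv_denom_coeffs) \<rho>"
    and "poly (Poly xderiv_denom_coeffs) \<rho> \<le> 13384965758739218 / 10^17 + 55/2^50"
    using xderiv_denom_bounds_34543 unfolding abs_le_iff by linarith+
qed

lemma dominance_multiplier_coeff_close:
  assumes "1/2 \<le> x" "x \<le> 1/2 + 1/2^16"
  shows "\<bar>coeff (Poly dominance_multiplier * deflated_denom x) k\<bar> \<le>
           \<bar>coeff (Poly dominance_multiplier * deflated_denom (1/2)) k\<bar> + 155 * 285 / 2^16"
proof -
  define q where "q y = coeff (synthetic_div (Poly denom_coeffs) y)" for y :: real
  define h :: real where "h = 1/2"
  let ?S = "Poly dominance_multiplier"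
  have coeff_eq: "coeff (?S * deflated_denom y) k = - (\<Sum>j\<le>k. coeff ?S j * (y * q y (k - j)))" for y
    by (simp add: deflated_denom_def q_def coeff_mult sum_negf sum_distrib_left mult.left_commute)
  have "\<bar>coeff (?S * deflated_denom x) k - coeff (?S * deflated_denom h) k\<bar> =
          \<bar>\<Sum>j\<le>k. coeff ?S j * (h * q h (k - j) - x * q x (k - j))\<bar>"
    by (simp add: coeff_eq sum_subtractf[symmetric] right_diff_distrib)
  also have "\<dots> \<le> (\<Sum>j\<le>k. \<bar>coeff ?S j\<bar> * \<bar>h * q h (k - j) - x * q x (k - j)\<bar>)"
    by (rule order.trans[OF sum_abs]) (simp add: abs_mult)
  also have "\<dots> \<le> (\<Sum>j\<le>k. \<bar>coeff ?S j\<bar> * (horner_lip 1 denom_coeffs * \<bar>h - x\<bar>))"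
    unfolding q_def h_def using assms
    by (intro sum_mono mult_left_mono synthetic_div_coeff_lipschitz) auto
  also have "\<dots> = (\<Sum>j\<le>k. \<bar>coeff ?S j\<bar>) * (horner_lip 1 denom_coeffs * \<bar>h - x\<bar>)"
    by (simp add: sum_distrib_right)
  also have "\<dots> \<le> 155 * (285 * (1/2^16))"
  proof (rule mult_mono)
    show "(\<Sum>j\<le>k. \<bar>coeff ?S j\<bar>) \<le> 155"
      using sum_abs_nth_default_le[where k=k and cs=dominance_multiplier] by (simp add: horner_constants_34543)
    show "horner_lip 1 denom_coeffs * \<bar>h - x\<bar> \<le> 285 * (1/2^16)"
      using assms by (simp add: horner_constants_34543 h_def)
  qed (simp_all add: horner_constants_34543)
  finally show ?thesis
    using abs_triangle_ineq2[of "coeff (?S * deflated_denom x) k" "coeff (?S * deflated_denom h) k"]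
    by (simp add: h_def)
qed

lemma dominance_multiplier_bound:
  assumes "1/2 \<le> x" "x \<le> 1/2 + 1/2^16"
  shows "(\<Sum>k=1..27. \<bar>coeff (Poly dominance_multiplier * deflated_denom x) k\<bar> * (33/64)^k) \<le> 1"
proof -
  let ?\<tau> = "\<lambda>y. Poly dominance_multiplier * deflated_denom y"
  define B :: real where "B = 155 * 285 / 2^16"
  have "{1..27::nat} = set [1..<28]" by auto
  then have exact: "(\<Sum>k=1..27. \<bar>coeff (?\<tau> (1/2)) k\<bar> * (33/64)^k) \<le> 1/4"
    and geometric: "(\<Sum>k=1..27. (33/64::real)^k) \<le> 33/31"
    by (simp_all add: sum_set_upt_conv_sum_list_nat upt_rec dominance_multiplier_def
        deflated_denom_def denom_coeffs_def power_divide del: set_upt)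
  have "(\<Sum>k=1..27. \<bar>coeff (?\<tau> x) k\<bar> * (33/64)^k) \<le>
          (\<Sum>k=1..27. (\<bar>coeff (?\<tau> (1/2)) k\<bar> + B) * (33/64)^k)"
    unfolding B_def using assms by (intro sum_mono mult_right_mono dominance_multiplier_coeff_close) auto
  also have "\<dots> = (\<Sum>k=1..27. \<bar>coeff (?\<tau> (1/2)) k\<bar> * (33/64)^k) + B * (\<Sum>k=1..27. (33/64)^k)"
    by (simp add: distrib_right sum.distrib sum_distrib_left)
  also have "\<dots> \<le> 1/4 + B * (33/31)"
    using exact geometric by (intro add_mono mult_left_mono) (auto simp: B_def)
  also have "\<dots> \<le> 1" by (simp add: B_def)
  finally show ?thesis .
qed

lemma dominant_root_constants_34543:
  fixes \<rho> :: real
  assumes "562965996707165 / 2^50 \<le> \<rho>" "\<rho> \<le> 562965996707166 / 2^50"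
  shows "\<bar>1 / \<rho> - 1.99994300442\<bar> < 1 / 10^11"
    and "\<bar>poly (Poly numer_coeffs) \<rho> / poly (Poly xderiv_denom_coeffs) \<rho> - 0.50029301491\<bar> < 1 / 10^11"
proof -
  have "1 / (562965996707166 / 2^50) \<le> 1 / \<rho>" "1 / \<rho> \<le> 1 / (562965996707165 / 2^50)"
    using assms by (simp_all add: field_simps)
  then show "\<bar>1 / \<rho> - 1.99994300442\<bar> < 1 / 10^11"
    by (simp add: abs_less_iff)
  note bounds = bounds_near_denom_root_34543[OF assms]
  have "(6696404873893933 / 10^17 - 15/2^50) / (13384965758739218 / 10^17 + 55/2^50) \<le>
          poly (Poly numer_coeffs) \<rho> / poly (Poly xderiv_denom_coeffs) \<rho>"
    using bounds by (intro frac_le) auto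
  moreover have "poly (Poly numer_coeffs) \<rho> / poly (Poly xderiv_denom_coeffs) \<rho> \<le>
          (6696404873893934 / 10^17 + 15/2^50) / (13384965758739217 / 10^17 - 55/2^50)"
    using bounds by (intro frac_le) auto
  ultimately show "\<bar>poly (Poly numer_coeffs) \<rho> / poly (Poly xderiv_denom_coeffs) \<rho> - 0.50029301491\<bar>
      < 1 / 10^11"
    by (simp add: abs_less_iff)
qed

lemma asymptotics_34543:
  fixes a :: "nat \<Rightarrow> real"
  assumes gf: "Abs_fps a * fps_of_poly (Poly denom_coeffs) = fps_of_poly (Poly numer_coeffs)"
  shows "\<exists>r c :: real.
           \<bar>r - 1.99994300442\<bar> < 1 / 10^11 \<and> \<bar>c - 0.50029301491\<bar> < 1 / 10^11 \<and>
           ((\<lambda>n. a (Suc n) / a n) \<longlonglongrightarrow> r) \<and> a \<sim>[at_top] (\<lambda>n. c * r ^ n)"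
proof -
  obtain \<rho> :: real where bracket: "562965996707165 / 2^50 \<le> \<rho>" "\<rho> \<le> 562965996707166 / 2^50"
    and root: "poly (Poly denom_coeffs) \<rho> = 0"
    by (rule denom_root_34543)
  define r where "r = 1 / \<rho>"
  define c where "c = poly (Poly numer_coeffs) \<rho> / poly (Poly xderiv_denom_coeffs) \<rho>"
  let ?E = "deflated_denom \<rho>"
  have \<rho>: "1/2 \<le> \<rho>" "\<rho> \<le> 1/2 + 1/2^16" "0 < r" "1 / r = \<rho>"
    using bracket by (auto simp: r_def)
  have E_at_root: "poly ?E \<rho> = poly (Poly xderiv_denom_coeffs) \<rho>"
    by (simp add: deflated_denom_def poly_xderiv_denom_coeffs poly_synthetic_div_at_root[OF root])
  have "Poly denom_coeffs = [:1, -r:] * ?E"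
    unfolding deflated_denom_def r_def using root \<rho> by (intro linear_factor_synthetic_div) auto
  moreover have "coeff (Poly dominance_multiplier * ?E) 0 = 1"
    using root by (simp add: deflated_denom_def dominance_multiplier_def denom_coeffs_def
        coeff_synthetic_div_Poly algebra_simps)
  moreover have "degree (Poly dominance_multiplier * ?E) \<le> 27"
    using degree_mult_le[of "Poly dominance_multiplier" ?E] degree_deflated_denom[of \<rho>] degrees_34543
    by linarith
  moreover have "1 < 33/64 * r"
    using \<rho> by (simp add: r_def field_simps)
  moreover have "poly ?E (1 / r) \<noteq> 0"
    using E_at_root bounds_near_denom_root_34543(3)[OF bracket] \<rho>(4) by simp
  ultimately have "(\<lambda>n. a n / r ^ n) \<longlonglongrightarrow> c"
    using dominant_root_limit[OF gf, of r ?E "Poly dominance_multiplier" 27 "33/64"]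
      dominance_multiplier_bound[OF \<rho>(1,2)] \<rho>(3)
    by (simp add: E_at_root c_def \<rho>(4))
  moreover have "c \<noteq> 0"
    using bounds_near_denom_root_34543[OF bracket] by (simp add: c_def)
  ultimately show ?thesis
    using ratio_and_asymp_equiv_if_limit[of a r c] dominant_root_constants_34543[OF bracket] \<rho>(3)
    unfolding r_def c_def by blast
qed

theorem theorem1:
  shows "(Abs_fps (\<lambda>n. real (a34543 n)) =
           - (1 - 4*fps_X + 6*fps_X^2 - 4*fps_X^3 + fps_X^4 + fps_X^16 + fps_X^13 - fps_X^14
              + fps_X^9 - 2*fps_X^10 + fps_X^11 + fps_X^5 - 3*fps_X^6 + 3*fps_X^7 - fps_X^8)
             / (fps_X^18 + fps_X^17 - fps_X^16 + 2*fps_X^14 - fps_X^13 - 2*fps_X^11 + 3*fps_X^10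
              - fps_X^9 + 2*fps_X^8 - 5*fps_X^7 + 4*fps_X^6 - fps_X^5 - 2*fps_X^4 + 7*fps_X^3
              - 9*fps_X^2 + 5*fps_X - 1)) \<and>
         map a34543 [0..<31] =
           [1, 1, 2, 4, 8, 16, 32, 64, 128, 256, 512, 1024, 2048, 4096, 8192, 16384, 32768,
            65536, 131072, 262143, 524281, 1048546, 2097050, 4194001, 8387784, 16775108,
            33549270, 67096623, 134189393, 268371074, 536726740] \<and>
         (\<exists>r c :: real.
           \<bar>r - 1.99994300442\<bar> < 1 / 10^11 \<and> \<bar>c - 0.50029301491\<bar> < 1 / 10^11 \<and>
           ((\<lambda>n. real (a34543 (Suc n)) / real (a34543 n)) \<longlonglongrightarrow> r) \<and>
           (\<lambda>n. real (a34543 n)) \<sim>[at_top] (\<lambda>n. c * r ^ n))"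
  using a34543_gf[unfolded denom_34543_def numer_34543_def] a34543_values
    asymptotics_34543[OF a34543_series_mult_denom_poly] by blast

end
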